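(* Let $G=(V,E)$ be an undirected graph, $\vec{x}\in\mathbb{R}^n$ non-negative with $\|\vec{x}\|_1=1$, and $\delta\in(0,1)$. Consider any of the following choices of $(a,b,(w_i))$: (i) PageRank/Personalized PageRank: $a=0,b=1$, $w_i=\alpha(1-\alpha)^i$ with constant $\alpha\in(0,1)$; (ii) heat kernel PageRank: $a=0,b=1$, $w_i=e^{-t}t^i/i!$ with constant $t>0$; (iii) $k$-hop transition probability: $a=0,b=1$, $w_k=1$ and $w_i=0$ for $i\neq k$; (iv) Katz: $a=b=0$, $w_i=\beta^i$ with constant $0<\beta<1/\lambda_1$, where $\lambda_1$ is the largest eigenvalue of $\mathbf{A}$. Let $\mathbf{P}=\mathbf{D}^{-a}\mathbf{A}\mathbf{D}^{-b}$, $\vec{\pi}=\sum_{i=0}^\infty w_i\mathbf{P}^i\vec{x}$ and $\vec{\pi}_L=\sum_{i=0}^L w_i\mathbf{P}^i\vec{x}$. Then (without any further assumption on the weights) there is an integer $L$, with $L=O(\log(1/\delta))$ in cases (i), (ii), (iv) and any $L\ge k$ in case (iii), such that $\left\|\sum_{i=L+1}^\infty w_i\mathbf{P}^i\vec{x}\right\|_2\le\delta/19$, and consequently: if $\hat{\vec{\pi}}\in\mathbb{R}^n$ satisfies $|\vec{\pi}_L(v)-\hat{\vec{\pi}}(v)|\le\frac{1}{20}\vec{\pi}_L(v)$ for every $v$ with $\vec{\pi}_L(v)>\frac{18}{19}\delta$, then $|\vec{\pi}(v)-\hat{\vec{\pi}}(v)|\le\frac{1}{10}\vec{\pi}(v)$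 for every $v$ with $\vec{\pi}(v)\ge\delta$.
   Context: $G=(V,E)$ has $n$ nodes; $\mathbf{A}$ is its adjacency matrix and $\mathbf{D}$ the diagonal degree matrix with $\mathbf{D}(i,i)=\sum_j\mathbf{A}(i,j)$; $\mathbf{D}^{0}$ is the identity. *)

theory Defs
  imports "HOL-Analysis.Analysis"
begin

text \<open>Vectors in R^n are functions nat => real, only indices < n matter;
  n x n matrices are functions nat => nat => real, only indices < n matter.\<close>

definition undirected_graph :: "nat \<Rightarrow> (nat \<Rightarrow> nat \<Rightarrow> real) \<Rightarrow> bool" where
  "undirected_graph n A \<longleftrightarrow>
     (\<forall>i<n. \<forall>j<n. (A i j = 0 \<or> A i j = 1) \<and> A i j = A j i) \<and> (\<forall>i<n. A i i = 0)"

definition degree :: "nat \<Rightarrow> (nat \<Rightarrow> nat \<Rightarrow> real) \<Rightarrow> nat \<Rightarrow> real" where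
  "degree n A i = (\<Sum>j<n. A i j)"

text \<open>P = D^{-a} A D^{-b}; note D^0 = I since d^0 = 1.\<close>
definition transM :: "nat \<Rightarrow> (nat \<Rightarrow> nat \<Rightarrow> real) \<Rightarrow> nat \<Rightarrow> nat \<Rightarrow> nat \<Rightarrow> nat \<Rightarrow> real" where
  "transM n A a b i j = inverse (degree n A i ^ a) * A i j * inverse (degree n A j ^ b)"

definition mat_vec :: "nat \<Rightarrow> (nat \<Rightarrow> nat \<Rightarrow> real) \<Rightarrow> (nat \<Rightarrow> real) \<Rightarrow> (nat \<Rightarrow> real)" where
  "mat_vec n M v = (\<lambda>i. \<Sum>j<n. M i j * v j)"

definition mat_pow_vec :: "nat \<Rightarrow> (nat \<Rightarrow> nat \<Rightarrow> real) \<Rightarrow> nat \<Rightarrow> (nat \<Rightarrow> real) \<Rightarrow> (nat \<Rightarrow> real)" where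
  "mat_pow_vec n M i x = (mat_vec n M ^^ i) x"

definition norm1 :: "nat \<Rightarrow> (nat \<Rightarrow> real) \<Rightarrow> real" where
  "norm1 n v = (\<Sum>i<n. \<bar>v i\<bar>)"

definition norm2 :: "nat \<Rightarrow> (nat \<Rightarrow> real) \<Rightarrow> real" where
  "norm2 n v = sqrt (\<Sum>i<n. (v i)^2)"

definition eigenvalues :: "nat \<Rightarrow> (nat \<Rightarrow> nat \<Rightarrow> real) \<Rightarrow> real set" where
  "eigenvalues n M = {\<mu>. \<exists>v. (\<exists>i<n. v i \<noteq> 0) \<and> (\<forall>i<n. (\<Sum>j<n. M i j * v j) = \<mu> * v i)}"

definition largest_eigenvalue :: "nat \<Rightarrow> (nat \<Rightarrow> nat \<Rightarrow> real) \<Rightarrow> real" where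
  "largest_eigenvalue n M = Max (eigenvalues n M)"

definition ppr :: "nat \<Rightarrow> (nat \<Rightarrow> nat \<Rightarrow> real) \<Rightarrow> nat \<Rightarrow> nat \<Rightarrow> (nat \<Rightarrow> real) \<Rightarrow> (nat \<Rightarrow> real) \<Rightarrow> (nat \<Rightarrow> real)" where
  "ppr n A a b w x = (\<lambda>v. \<Sum>i. w i * mat_pow_vec n (transM n A a b) i x v)"

definition ppr_trunc :: "nat \<Rightarrow> (nat \<Rightarrow> nat \<Rightarrow> real) \<Rightarrow> nat \<Rightarrow> nat \<Rightarrow> (nat \<Rightarrow> real) \<Rightarrow> nat \<Rightarrow> (nat \<Rightarrow> real) \<Rightarrow> (nat \<Rightarrow> real)" where
  "ppr_trunc n A a b w L x = (\<lambda>v. \<Sum>i\<le>L. w i * mat_pow_vec n (transM n A a b) i x v)"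

definition ppr_tail :: "nat \<Rightarrow> (nat \<Rightarrow> nat \<Rightarrow> real) \<Rightarrow> nat \<Rightarrow> nat \<Rightarrow> (nat \<Rightarrow> real) \<Rightarrow> nat \<Rightarrow> (nat \<Rightarrow> real) \<Rightarrow> (nat \<Rightarrow> real)" where
  "ppr_tail n A a b w L x = (\<lambda>v. \<Sum>i. w (i + L + 1) * mat_pow_vec n (transM n A a b) (i + L + 1) x v)"

definition good_trunc :: "nat \<Rightarrow> (nat \<Rightarrow> nat \<Rightarrow> real) \<Rightarrow> nat \<Rightarrow> nat \<Rightarrow> (nat \<Rightarrow> real) \<Rightarrow> (nat \<Rightarrow> real) \<Rightarrow> real \<Rightarrow> nat \<Rightarrow> bool" where
  "good_trunc n A a b w x \<delta> L \<longleftrightarrow>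
     (\<forall>v<n. summable (\<lambda>i. w i * mat_pow_vec n (transM n A a b) i x v)) \<and>
     norm2 n (ppr_tail n A a b w L x) \<le> \<delta> / 19 \<and>
     (\<forall>pihat :: nat \<Rightarrow> real.
        (\<forall>v<n. ppr_trunc n A a b w L x v > 18/19 * \<delta> \<longrightarrow>
               \<bar>ppr_trunc n A a b w L x v - pihat v\<bar> \<le> 1/20 * ppr_trunc n A a b w L x v) \<longrightarrow>
        (\<forall>v<n. ppr n A a b w x v \<ge> \<delta> \<longrightarrow>
               \<bar>ppr n A a b w x v - pihat v\<bar> \<le> 1/10 * ppr n A a b w x v))"

definition valid_input :: "nat \<Rightarrow> (nat \<Rightarrow> real) \<Rightarrow> bool" where
  "valid_input n x \<longleftrightarrow> (\<forall>i<n. x i \<ge> 0) \<and> norm1 n x = 1"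

end

(* The tail sum_{i>L} w_i P^i x is a nonnegative vector, so its 2-norm and each of its
   entries are bounded by its total mass sum_{i>L} w_i |P^i x|_1.  If this mass is below
   delta/19, then pi = pi_L + tail with a tail entry below delta/19, and a 1/20-relative
   approximation of pi_L is a 1/10-relative approximation of pi wherever pi >= delta.

   For a = 0, b = 1 the matrix P = A D^-1 is column-substochastic, so |P^i x|_1 <= 1 and
   the mass is at most sum_{i>L} w_i: geometric with ratio 1 - alpha for PageRank, dominated
   by e^t 2^-i for the heat kernel, and zero for the k-hop weights once L >= k.  For Katz,
   the operator norm r of the symmetric nonnegative matrix A is attained at a nonnegative
   unit vector w; the first variation gives A^2 w = r^2 w, so Aw + rw is an eigenvector for
   r and r <= lambda_1.  Hence |A^i x|_2 <= r^i and the mass is geometric with ratio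
   beta r < 1.  A geometric tail drops below delta/19 after O(log(1/delta)) terms. *)
theory Submission
  imports Defs "Jordan_Normal_Form.Char_Poly"
begin

section \<open>Graph matrices\<close>

lemma undirected_graph_nonneg:
  assumes "undirected_graph n A" "i < n" "j < n"
  shows "0 \<le> A i j"
proof -
  have "A i j = 0 \<or> A i j = 1" using assms unfolding undirected_graph_def by blast
  then show ?thesis by auto
qed

lemma undirected_graph_sym: "undirected_graph n A \<Longrightarrow> i < n \<Longrightarrow> j < n \<Longrightarrow> A i j = A j i"
  unfolding undirected_graph_def by blast

lemma transM_0_1: "transM n A 0 1 i j = A i j / Defs.degree n A j"
  unfolding transM_def by (simp add: divide_inverse)

lemma transM_0_0: "transM n A 0 0 = A"
  unfolding transM_def by (intro ext) simp

lemma mat_pow_vec_0 [simp]: "mat_pow_vec n M 0 x = x"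
  unfolding mat_pow_vec_def by simp

lemma mat_pow_vec_Suc [simp]: "mat_pow_vec n M (Suc i) x = mat_vec n M (mat_pow_vec n M i x)"
  unfolding mat_pow_vec_def by simp

lemma mat_vec_nonneg:
  assumes "\<And>i j. i < n \<Longrightarrow> j < n \<Longrightarrow> 0 \<le> M i j" "\<And>j. j < n \<Longrightarrow> 0 \<le> u j" "i < n"
  shows "0 \<le> mat_vec n M u i"
  unfolding mat_vec_def using assms by (intro sum_nonneg mult_nonneg_nonneg) auto

lemma mat_pow_vec_nonneg:
  assumes M: "\<And>i j. i < n \<Longrightarrow> j < n \<Longrightarrow> 0 \<le> M i j" and x: "\<And>j. j < n \<Longrightarrow> 0 \<le> x j"
    and "v < n"
  shows "0 \<le> mat_pow_vec n M k x v"
  using \<open>v < n\<close>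
proof (induction k arbitrary: v)
  case 0
  then show ?case by (simp add: x)
next
  case (Suc k)
  then show ?case unfolding mat_pow_vec_Suc by (intro mat_vec_nonneg M) auto
qed

section \<open>Truncating a series of nonnegative vectors\<close>

lemma relative_error_transfer:
  fixes p q t h \<delta> :: real
  assumes split: "p = q + t" and t: "0 \<le> t" "t < \<delta> / 19" and large: "\<delta> \<le> p"
    and approx: "18/19 * \<delta> < q \<Longrightarrow> \<bar>q - h\<bar> \<le> 1/20 * q"
  shows "\<bar>p - h\<bar> \<le> 1/10 * p"
proof -
  have "\<bar>q - h\<bar> \<le> 1/20 * q" using split t large by (intro approx) linarith
  then show ?thesis using split t large by linarith
qed

lemma good_trunc_of_mass_bound:
  fixes n a b L :: nat and A :: "nat \<Rightarrow> nat \<Rightarrow> real" and w e x :: "nat \<Rightarrow> real"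
  defines "f \<equiv> \<lambda>i v. w i * mat_pow_vec n (transM n A a b) i x v"
  assumes nonneg: "\<And>i v. v < n \<Longrightarrow> 0 \<le> f i v"
    and mass: "\<And>i. (\<Sum>v<n. f i v) \<le> e i"
    and "summable e"
    and small_tail: "(\<Sum>j. e (j + L + 1)) < \<delta> / 19"
  shows "good_trunc n A a b w x \<delta> L"
proof -
  have le_e: "f i v \<le> e i" if "v < n" for i v
    using member_le_sum[of v "{..<n}" "f i"] nonneg mass[of i] that by fastforce
  have summable_f: "summable (\<lambda>i. f i v)" if "v < n" for v
    using nonneg le_e that by (intro summable_comparison_test[OF _ \<open>summable e\<close>]) auto
  have summable_f_tail: "summable (\<lambda>j. f (j + L + 1) v)" if "v < n" for v
    using summable_ignore_initial_segment[OF summable_f[OF that], of "L + 1"]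
    by (simp add: add.assoc)
  have summable_e_tail: "summable (\<lambda>j. e (j + L + 1))"
    using summable_ignore_initial_segment[OF \<open>summable e\<close>, of "L + 1"] by (simp add: add.assoc)
  define t where "t v = (\<Sum>j. f (j + L + 1) v)" for v
  have t_nonneg: "0 \<le> t v" if "v < n" for v
    unfolding t_def using summable_f_tail[OF that] nonneg[OF that] by (intro suminf_nonneg) auto
  have "(\<Sum>v<n. t v) = (\<Sum>j. \<Sum>v<n. f (j + L + 1) v)"
    unfolding t_def using summable_f_tail by (intro suminf_sum[symmetric]) auto
  also have "\<dots> \<le> (\<Sum>j. e (j + L + 1))"
    using summable_f_tail mass summable_e_tail by (intro suminf_le summable_sum) auto
  finally have t_mass: "(\<Sum>v<n. t v) < \<delta> / 19" using small_tail by linarith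
  have t_small: "t v < \<delta> / 19" if "v < n" for v
    using member_le_sum[of v "{..<n}" t] t_nonneg that t_mass by fastforce
  have ppr_split: "ppr n A a b w x v = ppr_trunc n A a b w L x v + t v" if "v < n" for v
    using suminf_split_initial_segment[OF summable_f[OF that], of "Suc L"]
    unfolding ppr_def ppr_trunc_def t_def f_def lessThan_Suc_atMost by simp
  have "norm2 n (ppr_tail n A a b w L x) = L2_set t {..<n}"
    unfolding norm2_def L2_set_def ppr_tail_def t_def f_def ..
  also have "\<dots> \<le> (\<Sum>v<n. t v)" using t_nonneg by (intro L2_set_le_sum) auto
  finally have "norm2 n (ppr_tail n A a b w L x) \<le> \<delta> / 19" using t_mass by linarith
  moreover have "\<bar>ppr n A a b w x v - pihat v\<bar> \<le> 1/10 * ppr n A a b w x v"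
    if "\<forall>v<n. 18/19 * \<delta> < ppr_trunc n A a b w L x v \<longrightarrow>
        \<bar>ppr_trunc n A a b w L x v - pihat v\<bar> \<le> 1/20 * ppr_trunc n A a b w L x v"
      and "v < n" "\<delta> \<le> ppr n A a b w x v" for pihat v
    using that ppr_split t_nonneg t_small by (intro relative_error_transfer) auto
  ultimately show ?thesis
    unfolding good_trunc_def using summable_f by (auto simp: f_def)
qed

section \<open>Geometric tails are short\<close>

lemma exists_log_bound_power_less:
  fixes q D :: real
  assumes q: "0 \<le> q" "q < 1"
  shows "\<exists>C. \<forall>\<delta>. 0 < \<delta> \<and> \<delta> < 1 \<longrightarrow>
           (\<exists>L::nat. real L \<le> C * (1 + ln (1 / \<delta>)) \<and> D * q ^ L < \<delta>)"
proof (cases "q = 0")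
  case True
  then show ?thesis by (intro exI[of _ 1] allI impI exI[of _ 1]) auto
next
  case False
  define c where "c = - ln q"
  have "0 < c" unfolding c_def using False q by simp
  define D' where "D' = max D 1"
  have "0 \<le> ln D'" unfolding D'_def by simp
  define C where "C = (ln D' + 1) / c + 1"
  have "\<exists>L::nat. real L \<le> C * (1 + ln (1 / \<delta>)) \<and> D * q ^ L < \<delta>"
    if \<delta>: "0 < \<delta>" "\<delta> < 1" for \<delta>
  proof -
    define l where "l = ln (1 / \<delta>)"
    have "0 < l" unfolding l_def using \<delta> by simp
    define X where "X = (ln D' + l) / c"
    have "0 \<le> X" unfolding X_def using \<open>0 \<le> ln D'\<close> \<open>0 < l\<close> \<open>0 < c\<close> by simp
    define L where "L = nat \<lfloor>X\<rfloor> + 1"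
    have "real L = of_int \<lfloor>X\<rfloor> + 1" unfolding L_def using \<open>0 \<le> X\<close> by (simp add: of_nat_nat)
    then have L: "X < real L" "real L \<le> X + 1" using floor_correct[of X] by linarith+
    have "C * (1 + l) = X + 1 + (1 + l * ln D') / c + l"
      unfolding C_def X_def using \<open>0 < c\<close> by (simp add: field_simps)
    moreover have "0 \<le> (1 + l * ln D') / c"
      using \<open>0 \<le> ln D'\<close> \<open>0 < l\<close> \<open>0 < c\<close> by simp
    ultimately have "real L \<le> C * (1 + l)" using L \<open>0 < l\<close> by linarith
    have "ln (D' * q ^ L) = ln D' - real L * c"
      using False q unfolding D'_def c_def by (simp add: ln_mult ln_realpow)
    also have "\<dots> < ln D' - X * c" using L \<open>0 < c\<close> by simp
    also have "\<dots> = ln \<delta>" unfolding X_def l_def using \<open>0 < c\<close> \<delta> by (simp add: ln_div)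
    finally have "D' * q ^ L < \<delta>"
      using False q \<delta> unfolding D'_def by (simp add: ln_less_cancel_iff)
    moreover have "D * q ^ L \<le> D' * q ^ L" unfolding D'_def using q by (simp add: mult_right_mono)
    ultimately show ?thesis using \<open>real L \<le> C * (1 + l)\<close> unfolding l_def by force
  qed
  then show ?thesis by blast
qed

lemma exists_log_truncation:
  fixes q K :: real and P :: "real \<Rightarrow> nat \<Rightarrow> bool"
  assumes q: "0 \<le> q" "q < 1"
    and P: "\<And>\<delta> L. (\<Sum>j. K * q ^ (j + L + 1)) < \<delta> / 19 \<Longrightarrow> P \<delta> L"
  shows "\<exists>C. \<forall>\<delta>. 0 < \<delta> \<and> \<delta> < 1 \<longrightarrow> (\<exists>L::nat. real L \<le> C * (1 + ln (1 / \<delta>)) \<and> P \<delta> L)"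
proof -
  have tail: "(\<Sum>j. K * q ^ (j + L + 1)) = K * q / (1 - q) * q ^ L" for L
  proof -
    have "(\<lambda>j. K * q ^ (L + 1) * q ^ j) sums (K * q ^ (L + 1) * (1 / (1 - q)))"
      using q by (intro sums_mult geometric_sums) auto
    then show ?thesis by (simp add: sums_iff power_add mult_ac)
  qed
  obtain C where C: "\<And>\<delta>. 0 < \<delta> \<and> \<delta> < 1 \<Longrightarrow>
      \<exists>L::nat. real L \<le> C * (1 + ln (1 / \<delta>)) \<and> 19 * (K * q / (1 - q)) * q ^ L < \<delta>"
    using exists_log_bound_power_less[OF q] by blast
  have "P \<delta> L" if "19 * (K * q / (1 - q)) * q ^ L < \<delta>" for \<delta> L
    using P[of L \<delta>] that unfolding tail by (simp add: mult_ac)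
  then show ?thesis using C by meson
qed

section \<open>Random walks: PageRank, heat kernel and k-hop weights\<close>

lemma walk_matrix_nonneg:
  assumes "undirected_graph n A" "i < n" "j < n"
  shows "0 \<le> transM n A 0 1 i j"
  unfolding transM_0_1 Defs.degree_def using assms undirected_graph_nonneg[OF assms(1)]
  by (intro divide_nonneg_nonneg sum_nonneg) auto

lemma walk_step_mass_le:
  assumes G: "undirected_graph n A" and u: "\<And>j. j < n \<Longrightarrow> 0 \<le> u j"
  shows "(\<Sum>i<n. mat_vec n (transM n A 0 1) u i) \<le> (\<Sum>j<n. u j)"
proof -
  have "(\<Sum>i<n. mat_vec n (transM n A 0 1) u i) = (\<Sum>j<n. (\<Sum>i<n. A i j) / Defs.degree n A j * u j)"
    unfolding mat_vec_def transM_0_1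
    by (subst sum.swap) (simp add: sum_distrib_right sum_divide_distrib)
  also have "\<dots> = (\<Sum>j<n. Defs.degree n A j / Defs.degree n A j * u j)"
    unfolding Defs.degree_def using undirected_graph_sym[OF G] by (intro sum.cong) auto
  also have "\<dots> \<le> (\<Sum>j<n. u j)"
    \<comment> \<open>an isolated vertex has degree 0 and contributes 0 / 0 = 0\<close>
    using u by (intro sum_mono) (simp add: divide_self_if)
  finally show ?thesis .
qed

lemma walk_pow_nonneg:
  assumes G: "undirected_graph n A" and x: "valid_input n x" and "v < n"
  shows "0 \<le> mat_pow_vec n (transM n A 0 1) i x v"
  using walk_matrix_nonneg[OF G] x \<open>v < n\<close> unfolding valid_input_def
  by (intro mat_pow_vec_nonneg[where M = "transM n A 0 1"]) auto

lemma walk_pow_mass_le_1: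
  assumes G: "undirected_graph n A" and x: "valid_input n x"
  shows "(\<Sum>v<n. mat_pow_vec n (transM n A 0 1) i x v) \<le> 1"
proof (induction i)
  case 0
  have "(\<Sum>v<n. x v) = norm1 n x"
    unfolding norm1_def using x by (intro sum.cong) (auto simp: valid_input_def)
  then show ?case using x by (simp add: valid_input_def)
next
  case (Suc i)
  then show ?case
    using walk_step_mass_le[OF G, of "mat_pow_vec n (transM n A 0 1) i x"] walk_pow_nonneg[OF G x]
    by simp
qed

lemma good_trunc_walk:
  assumes G: "undirected_graph n A" and x: "valid_input n x"
    and w: "\<And>i. 0 \<le> w i" "\<And>i. w i \<le> e i"
    and "summable e" and "(\<Sum>j. e (j + L + 1)) < \<delta> / 19"
  shows "good_trunc n A 0 1 w x \<delta> L"
proof (rule good_trunc_of_mass_bound[where e = e])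
  show "0 \<le> w i * mat_pow_vec n (transM n A 0 1) i x v" if "v < n" for i v
    using walk_pow_nonneg[OF G x that] w by simp
  show "(\<Sum>v<n. w i * mat_pow_vec n (transM n A 0 1) i x v) \<le> e i" for i
  proof -
    have "(\<Sum>v<n. w i * mat_pow_vec n (transM n A 0 1) i x v)
        = w i * (\<Sum>v<n. mat_pow_vec n (transM n A 0 1) i x v)"
      by (simp add: sum_distrib_left)
    also have "\<dots> \<le> w i" using walk_pow_mass_le_1[OF G x] w by (simp add: mult_left_le)
    also have "\<dots> \<le> e i" by (rule w(2))
    finally show ?thesis .
  qed
qed (use assms in auto)

lemma pagerank_truncation:
  fixes \<alpha> :: real
  assumes "0 < \<alpha>" "\<alpha> < 1"
  shows "\<exists>C. \<forall>n A x \<delta>. undirected_graph n A \<and> valid_input n x \<and> 0 < \<delta> \<and> \<delta> < 1 \<longrightarrow>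
           (\<exists>L::nat. real L \<le> C * (1 + ln (1 / \<delta>)) \<and>
              good_trunc n A 0 1 (\<lambda>i. \<alpha> * (1 - \<alpha>) ^ i) x \<delta> L)"
proof -
  have "summable (\<lambda>i. \<alpha> * (1 - \<alpha>) ^ i)"
    using assms by (intro summable_mult summable_geometric) auto
  then have "\<exists>C. \<forall>\<delta>. 0 < \<delta> \<and> \<delta> < 1 \<longrightarrow> (\<exists>L::nat. real L \<le> C * (1 + ln (1 / \<delta>)) \<and>
      (\<forall>n A x. undirected_graph n A \<and> valid_input n x \<longrightarrow>
        good_trunc n A 0 1 (\<lambda>i. \<alpha> * (1 - \<alpha>) ^ i) x \<delta> L))"
    using assms
    by (intro exists_log_truncation[of "1 - \<alpha>" \<alpha>] allI impI
        good_trunc_walk[where e = "\<lambda>i. \<alpha> * (1 - \<alpha>) ^ i"]) auto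
  then show ?thesis by blast
qed

lemma power_div_fact_le_exp:
  fixes y :: real
  assumes "0 \<le> y"
  shows "y ^ i / fact i \<le> exp y"
proof -
  have exp: "(\<lambda>k. y ^ k / fact k) sums exp y"
    using exp_converges[of y] by (simp add: divide_inverse mult.commute scaleR_conv_of_real)
  have "(\<Sum>k\<in>{i}. y ^ k / fact k) \<le> (\<Sum>k. y ^ k / fact k)"
    using exp assms by (intro sum_le_suminf) (auto simp: sums_iff)
  then show ?thesis using exp by (simp add: sums_iff)
qed

lemma heat_kernel_weight_le:
  fixes t :: real
  assumes "0 < t"
  shows "exp (- t) * t ^ i / fact i \<le> exp t * (1/2) ^ i"
proof -
  have "exp (- t) * t ^ i / fact i = exp (- t) * ((2 * t) ^ i / fact i) * (1/2) ^ i"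
    by (simp add: power_mult_distrib field_simps)
  also have "\<dots> \<le> exp (- t) * exp (2 * t) * (1/2) ^ i"
    using power_div_fact_le_exp[of "2 * t" i] assms by (intro mult_right_mono mult_left_mono) auto
  also have "exp (- t) * exp (2 * t) = exp t" by (simp flip: exp_add)
  finally show ?thesis .
qed

lemma heat_kernel_truncation:
  fixes t :: real
  assumes "0 < t"
  shows "\<exists>C. \<forall>n A x \<delta>. undirected_graph n A \<and> valid_input n x \<and> 0 < \<delta> \<and> \<delta> < 1 \<longrightarrow>
           (\<exists>L::nat. real L \<le> C * (1 + ln (1 / \<delta>)) \<and>
              good_trunc n A 0 1 (\<lambda>i. exp (- t) * t ^ i / fact i) x \<delta> L)"
proof -
  have "summable (\<lambda>i. exp t * (1/2::real) ^ i)"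
    by (intro summable_mult summable_geometric) auto
  then have "\<exists>C. \<forall>\<delta>. 0 < \<delta> \<and> \<delta> < 1 \<longrightarrow> (\<exists>L::nat. real L \<le> C * (1 + ln (1 / \<delta>)) \<and>
      (\<forall>n A x. undirected_graph n A \<and> valid_input n x \<longrightarrow>
        good_trunc n A 0 1 (\<lambda>i. exp (- t) * t ^ i / fact i) x \<delta> L))"
    using assms heat_kernel_weight_le
    by (intro exists_log_truncation[of "1/2" "exp t"] allI impI
        good_trunc_walk[where e = "\<lambda>i. exp t * (1/2) ^ i"]) auto
  then show ?thesis by blast
qed

lemma k_hop_truncation:
  assumes "undirected_graph n A" "valid_input n x" "0 < \<delta>" "k \<le> L"
  shows "good_trunc n A 0 1 (\<lambda>i. if i = k then 1 else 0) x \<delta> L"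
proof (rule good_trunc_walk[where e = "\<lambda>i. if i = k then 1 else 0"])
  have "(\<lambda>j. if j + L + 1 = k then 1 else 0) = (\<lambda>j. 0::real)" using \<open>k \<le> L\<close> by auto
  then show "(\<Sum>j. if j + L + 1 = k then 1 else 0) < \<delta> / 19" using \<open>0 < \<delta>\<close> by simp
qed (use assms summable_single[of k "\<lambda>_. 1::real"] in auto)

section \<open>The spectral bound behind Katz centrality\<close>

definition sqnorm :: "nat \<Rightarrow> (nat \<Rightarrow> real) \<Rightarrow> real" where
  "sqnorm n v = (\<Sum>i<n. (v i)\<^sup>2)"

definition dot :: "nat \<Rightarrow> (nat \<Rightarrow> real) \<Rightarrow> (nat \<Rightarrow> real) \<Rightarrow> real" where
  "dot n u v = (\<Sum>i<n. u i * v i)"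

lemma sqnorm_nonneg: "0 \<le> sqnorm n v"
  unfolding sqnorm_def by (intro sum_nonneg) auto

lemma sqnorm_eq_0_iff: "sqnorm n v = 0 \<longleftrightarrow> (\<forall>i<n. v i = 0)"
  unfolding sqnorm_def by (auto simp: sum_nonneg_eq_0_iff)

lemma component_sq_le_sqnorm: "i < n \<Longrightarrow> (v i)\<^sup>2 \<le> sqnorm n v"
  unfolding sqnorm_def by (intro member_le_sum) auto

lemma sqnorm_le_norm1_sq: "sqnorm n x \<le> (norm1 n x)\<^sup>2"
proof -
  have "sqnorm n x = (L2_set x {..<n})\<^sup>2" unfolding sqnorm_def L2_set_def by (simp add: sum_nonneg)
  also have "\<dots> \<le> (norm1 n x)\<^sup>2" unfolding norm1_def by (intro power_mono L2_set_le_sum_abs) simp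
  finally show ?thesis .
qed

lemma sqnorm_cong: "(\<And>i. i < n \<Longrightarrow> u i = v i) \<Longrightarrow> sqnorm n u = sqnorm n v"
  unfolding sqnorm_def by simp

lemma mat_vec_cong: "(\<And>i. i < n \<Longrightarrow> u i = v i) \<Longrightarrow> mat_vec n A u = mat_vec n A v"
  unfolding mat_vec_def by simp

lemma sqnorm_scale: "sqnorm n (\<lambda>i. c * v i) = c\<^sup>2 * sqnorm n v"
  unfolding sqnorm_def by (simp add: power_mult_distrib sum_distrib_left)

lemma mat_vec_scale: "mat_vec n A (\<lambda>i. c * v i) = (\<lambda>i. c * mat_vec n A v i)"
  unfolding mat_vec_def by (simp add: sum_distrib_left mult_ac)

lemma mat_vec_add_scaled:
  "mat_vec n A (\<lambda>i. u i + t * h i) = (\<lambda>i. mat_vec n A u i + t * mat_vec n A h i)"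
  unfolding mat_vec_def by (simp add: sum.distrib sum_distrib_left algebra_simps)

lemma sqnorm_add_scaled:
  "sqnorm n (\<lambda>i. u i + t * h i) = sqnorm n u + 2 * t * dot n u h + t\<^sup>2 * sqnorm n h"
  unfolding sqnorm_def dot_def
  by (simp add: power2_eq_square sum.distrib sum_distrib_left algebra_simps)

lemma dot_mat_vec_sym:
  assumes "\<And>i j. i < n \<Longrightarrow> j < n \<Longrightarrow> A i j = A j i"
  shows "dot n (mat_vec n A u) h = dot n u (mat_vec n A h)"
proof -
  have "dot n (mat_vec n A u) h = (\<Sum>i<n. \<Sum>j<n. A i j * u j * h i)"
    unfolding dot_def mat_vec_def by (simp add: sum_distrib_right)
  also have "\<dots> = (\<Sum>j<n. \<Sum>i<n. u j * (A j i * h i))"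
    using assms by (subst sum.swap) (simp add: mult_ac)
  also have "\<dots> = dot n u (mat_vec n A h)"
    unfolding dot_def mat_vec_def by (simp add: sum_distrib_left)
  finally show ?thesis .
qed

lemma exists_max_stretch_on_unit_sphere:
  assumes "0 < n"
  shows "\<exists>w. sqnorm n w = 1 \<and>
    (\<forall>v. sqnorm n v = 1 \<longrightarrow> sqnorm n (mat_vec n A v) \<le> sqnorm n (mat_vec n A w))"
proof -
  define g where "g v = sqnorm n (mat_vec n A v)" for v
  \<comment> \<open>only coordinates below n matter; pinning the others to 0 makes the sphere compact\<close>
  define F where "F i = (if i < n then {-1..1} else {0::real})" for i
  define S where "S = PiE UNIV F \<inter> {v. sqnorm n v = 1}"
  have "compactin (product_topology (\<lambda>i. euclidean) UNIV) (PiE UNIV F)"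
    unfolding compactin_PiE F_def by auto
  then have "compact (PiE UNIV F)" unfolding euclidean_product_topology by simp
  moreover have "closed {v :: nat \<Rightarrow> real. sqnorm n v = 1}" unfolding sqnorm_def
    by (intro closed_Collect_eq continuous_intros continuous_on_product_coordinates)
  ultimately have "compact S" unfolding S_def by (rule compact_Int_closed)
  moreover have "(\<lambda>i. if i = 0 then 1 else 0) \<in> S"
    unfolding S_def F_def sqnorm_def using assms
    by (auto simp: PiE_iff if_distrib power2_eq_square cong: if_cong)
  moreover have "continuous_on UNIV g" unfolding g_def sqnorm_def mat_vec_def
    by (intro continuous_intros continuous_on_product_coordinates)
  then have "continuous_on S g" by (rule continuous_on_subset) simp
  ultimately obtain w where "w \<in> S" and w_max: "\<And>u. u \<in> S \<Longrightarrow> g u \<le> g w"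
    using continuous_attains_sup[of S g] by blast
  have "g v \<le> g w" if "sqnorm n v = 1" for v
  proof -
    define u where "u i = (if i < n then v i else 0)" for i
    have "sqnorm n u = 1" using that sqnorm_cong[of n u v] by (simp add: u_def)
    moreover have "g u = g v" unfolding g_def using mat_vec_cong[of n u v] by (simp add: u_def)
    moreover have "u \<in> PiE UNIV F"
      using component_sq_le_sqnorm[of _ n v] that
      by (auto simp: PiE_iff F_def u_def abs_le_iff abs_square_le_1 simp flip: abs_le_square_iff)
    ultimately show ?thesis using w_max[of u] unfolding S_def by auto
  qed
  with \<open>w \<in> S\<close> show ?thesis unfolding S_def g_def by auto
qed

lemma exists_max_stretch:
  assumes "0 < n"
  shows "\<exists>w. sqnorm n w = 1 \<and>
    (\<forall>v. sqnorm n (mat_vec n A v) \<le> sqnorm n (mat_vec n A w) * sqnorm n v)"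
proof -
  obtain w where w: "sqnorm n w = 1"
    and w_max: "\<And>v. sqnorm n v = 1 \<Longrightarrow> sqnorm n (mat_vec n A v) \<le> sqnorm n (mat_vec n A w)"
    using exists_max_stretch_on_unit_sphere[OF assms] by blast
  have "sqnorm n (mat_vec n A v) \<le> sqnorm n (mat_vec n A w) * sqnorm n v" for v
  proof (cases "sqnorm n v = 0")
    case True
    then have "mat_vec n A v = mat_vec n A (\<lambda>_. 0)" by (intro mat_vec_cong) (simp add: sqnorm_eq_0_iff)
    then show ?thesis using True by (simp add: mat_vec_def sqnorm_def)
  next
    case False
    define c where "c = 1 / sqrt (sqnorm n v)"
    have c2: "c\<^sup>2 * sqnorm n v = 1"
      using False sqnorm_nonneg[of n v] unfolding c_def by (simp add: power_divide)
    have "c\<^sup>2 * sqnorm n (mat_vec n A v) = sqnorm n (mat_vec n A (\<lambda>i. c * v i))"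
      by (simp add: mat_vec_scale sqnorm_scale)
    also have "\<dots> \<le> sqnorm n (mat_vec n A w)" using c2 by (intro w_max) (simp add: sqnorm_scale)
    finally have "sqnorm n v * (c\<^sup>2 * sqnorm n (mat_vec n A v)) \<le> sqnorm n v * sqnorm n (mat_vec n A w)"
      using sqnorm_nonneg by (rule mult_left_mono)
    moreover have "sqnorm n v * (c\<^sup>2 * sqnorm n (mat_vec n A v)) = sqnorm n (mat_vec n A v)"
      using c2 by (simp add: mult.assoc[symmetric] mult.commute[of "sqnorm n v"])
    ultimately show ?thesis by (simp add: mult.commute)
  qed
  with w show ?thesis by blast
qed

lemma exists_nonneg_max_stretch:
  assumes nonneg: "\<And>i j. i < n \<Longrightarrow> j < n \<Longrightarrow> 0 \<le> A i j" and "0 < n"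
  shows "\<exists>w. (\<forall>i. 0 \<le> w i) \<and> sqnorm n w = 1 \<and>
    (\<forall>v. sqnorm n (mat_vec n A v) \<le> sqnorm n (mat_vec n A w) * sqnorm n v)"
proof -
  obtain w where w: "sqnorm n w = 1"
    and w_max: "\<And>v. sqnorm n (mat_vec n A v) \<le> sqnorm n (mat_vec n A w) * sqnorm n v"
    using exists_max_stretch[OF \<open>0 < n\<close>] by blast
  define w' where "w' i = \<bar>w i\<bar>" for i
  have "\<bar>mat_vec n A w i\<bar> \<le> mat_vec n A w' i" if "i < n" for i
  proof -
    have "\<bar>mat_vec n A w i\<bar> \<le> (\<Sum>j<n. \<bar>A i j * w j\<bar>)" unfolding mat_vec_def by (rule sum_abs)
    also have "\<dots> = mat_vec n A w' i"
      unfolding mat_vec_def w'_def using nonneg that by (intro sum.cong) (auto simp: abs_mult)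
    finally show ?thesis .
  qed
  then have "sqnorm n (mat_vec n A w) \<le> sqnorm n (mat_vec n A w')"
    unfolding sqnorm_def by (intro sum_mono) (metis lessThan_iff power2_abs power_mono abs_ge_zero)
  then have "sqnorm n (mat_vec n A v) \<le> sqnorm n (mat_vec n A w') * sqnorm n v" for v
    using w_max[of v] sqnorm_nonneg[of n v] by (meson mult_right_mono order_trans)
  moreover have "sqnorm n w' = 1" using w unfolding sqnorm_def w'_def by simp
  moreover have "\<forall>i. 0 \<le> w' i" unfolding w'_def by simp
  ultimately show ?thesis by blast
qed

lemma quadratic_nonpos_imp_linear_coeff_zero:
  fixes c d :: real
  assumes "\<And>t. 2 * t * c + t\<^sup>2 * d \<le> 0"
  shows "c = 0"
proof (rule ccontr)
  assume "c \<noteq> 0"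
  define e where "e = \<bar>d\<bar> + 1"
  have "0 < e" unfolding e_def by simp
  define t where "t = c / e"
  have "t\<^sup>2 * (- e) \<le> t\<^sup>2 * d" unfolding e_def by (intro mult_left_mono) auto
  then have "- (t\<^sup>2 * e) \<le> t\<^sup>2 * d" by simp
  moreover have "2 * t * c = 2 * (c\<^sup>2 / e)" "t\<^sup>2 * e = c\<^sup>2 / e"
    unfolding t_def using \<open>0 < e\<close> by (simp_all add: power2_eq_square)
  moreover have "0 < c\<^sup>2 / e" using \<open>c \<noteq> 0\<close> \<open>0 < e\<close> by simp
  ultimately have "0 < 2 * t * c + t\<^sup>2 * d" by linarith
  with assms[of t] show False by linarith
qed

lemma max_stretch_eigen:
  assumes sym: "\<And>i j. i < n \<Longrightarrow> j < n \<Longrightarrow> A i j = A j i"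
    and w: "sqnorm n w = 1"
    and w_max: "\<And>v. sqnorm n (mat_vec n A v) \<le> sqnorm n (mat_vec n A w) * sqnorm n v"
    and "i < n"
  shows "mat_vec n A (mat_vec n A w) i = sqnorm n (mat_vec n A w) * w i"
proof -
  define s where "s = sqnorm n (mat_vec n A w)"
  define Aw where "Aw = mat_vec n A w"
  \<comment> \<open>the first variation of v \<mapsto> |Av|^2 - s |v|^2 at its maximum w vanishes in every direction h\<close>
  have first_variation: "dot n (mat_vec n A Aw) h = s * dot n w h" for h
  proof -
    have "2 * t * (dot n Aw (mat_vec n A h) - s * dot n w h)
        + t\<^sup>2 * (sqnorm n (mat_vec n A h) - s * sqnorm n h) \<le> 0" for t
      using w_max[of "\<lambda>i. w i + t * h i"] w
      unfolding mat_vec_add_scaled sqnorm_add_scaled s_def Aw_def by (simp add: algebra_simps)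
    then have "dot n Aw (mat_vec n A h) - s * dot n w h = 0"
      by (rule quadratic_nonpos_imp_linear_coeff_zero)
    then show ?thesis using dot_mat_vec_sym[of n A Aw h, OF sym] by simp
  qed
  define d where "d i = mat_vec n A Aw i - s * w i" for i
  have "sqnorm n d = dot n (mat_vec n A Aw) d - s * dot n w d"
    unfolding sqnorm_def dot_def d_def
    by (simp add: power2_eq_square left_diff_distrib sum_subtractf sum_distrib_left mult.assoc)
  then have "sqnorm n d = 0" using first_variation by simp
  then show ?thesis using \<open>i < n\<close> unfolding sqnorm_eq_0_iff d_def s_def Aw_def by simp
qed

lemma exists_eigenvalue_bounding_stretch:
  fixes A :: "nat \<Rightarrow> nat \<Rightarrow> real"
  assumes sym: "\<And>i j. i < n \<Longrightarrow> j < n \<Longrightarrow> A i j = A j i"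
    and nonneg: "\<And>i j. i < n \<Longrightarrow> j < n \<Longrightarrow> 0 \<le> A i j" and "0 < n"
  shows "\<exists>r. 0 \<le> r \<and> r \<in> eigenvalues n A \<and> (\<forall>v. sqnorm n (mat_vec n A v) \<le> r\<^sup>2 * sqnorm n v)"
proof -
  obtain w where w_nonneg: "\<And>i. 0 \<le> w i" and w: "sqnorm n w = 1"
    and w_max: "\<And>v. sqnorm n (mat_vec n A v) \<le> sqnorm n (mat_vec n A w) * sqnorm n v"
    using exists_nonneg_max_stretch[where n = n and A = A, OF nonneg \<open>0 < n\<close>] by blast
  define r where "r = sqrt (sqnorm n (mat_vec n A w))"
  have "0 \<le> r" unfolding r_def by (simp add: sqnorm_nonneg)
  have r2: "r\<^sup>2 = sqnorm n (mat_vec n A w)" unfolding r_def by (simp add: sqnorm_nonneg)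
  have "\<not> (\<forall>i<n. w i = 0)" using w sqnorm_eq_0_iff[of n w] by simp
  then obtain i0 where "i0 < n" "w i0 \<noteq> 0" by blast
  have "r \<in> eigenvalues n A"
  proof (cases "r = 0")
    case True
    then have "\<forall>i<n. mat_vec n A w i = 0" using r2 sqnorm_eq_0_iff by simp
    then show ?thesis
      unfolding eigenvalues_def mat_vec_def using \<open>i0 < n\<close> \<open>w i0 \<noteq> 0\<close> True
      by (intro CollectI exI[of _ w]) auto
  next
    case False
    \<comment> \<open>A^2 w = r^2 w, so z = Aw + rw satisfies Az = rz; z \<noteq> 0 because w \<ge> 0 and w \<noteq> 0\<close>
    define z where "z i = mat_vec n A w i + r * w i" for i
    have "(\<Sum>j<n. A i j * z j) = r * z i" if "i < n" for i
    proof -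
      have "(\<Sum>j<n. A i j * z j) = mat_vec n A (mat_vec n A w) i + r * mat_vec n A w i"
        unfolding z_def mat_vec_def by (simp add: sum.distrib sum_distrib_left algebra_simps)
      also have "\<dots> = r * z i"
        using max_stretch_eigen[where n = n and A = A, OF sym w w_max that] r2 unfolding z_def
        by (simp add: power2_eq_square algebra_simps)
      finally show ?thesis .
    qed
    moreover have "z i0 \<noteq> 0"
    proof -
      have "0 \<le> mat_vec n A w i0" using nonneg w_nonneg \<open>i0 < n\<close> by (intro mat_vec_nonneg) auto
      moreover have "0 < r * w i0" using False \<open>0 \<le> r\<close> w_nonneg[of i0] \<open>w i0 \<noteq> 0\<close> by simp
      ultimately show ?thesis unfolding z_def by linarith
    qed
    ultimately show ?thesis unfolding eigenvalues_def using \<open>i0 < n\<close> by blast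
  qed
  with \<open>0 \<le> r\<close> r2 w_max show ?thesis by auto
qed

lemma eigenvalues_finite: "finite (eigenvalues n A)"
proof -
  define M where "M = mat n n (\<lambda>(i, j). A i j)"
  have M: "M \<in> carrier_mat n n" unfolding M_def by auto
  have "eigenvalues n A \<subseteq> {\<mu>. poly (char_poly M) \<mu> = 0}"
  proof
    fix \<mu> assume "\<mu> \<in> eigenvalues n A"
    then obtain v where v: "\<exists>i<n. v i \<noteq> 0" "\<forall>i<n. (\<Sum>j<n. A i j * v j) = \<mu> * v i"
      unfolding eigenvalues_def by auto
    have "eigenvector M (vec n v) \<mu>"
      unfolding eigenvector_def
    proof (intro conjI)
      show "vec n v \<in> carrier_vec (dim_row M)" using M by auto
      show "vec n v \<noteq> 0\<^sub>v (dim_row M)" using v(1) M by (auto simp: vec_eq_iff)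
      show "M *\<^sub>v vec n v = \<mu> \<cdot>\<^sub>v vec n v"
        using v(2) unfolding M_def
        by (auto simp: vec_eq_iff mult_mat_vec_def scalar_prod_def lessThan_atLeast0 intro!: sum.cong)
    qed
    then show "\<mu> \<in> {\<mu>. poly (char_poly M) \<mu> = 0}"
      using eigenvalue_root_char_poly[OF M] unfolding eigenvalue_def by auto
  qed
  moreover have "char_poly M \<noteq> 0" using degree_monic_char_poly[OF M] by auto
  ultimately show ?thesis using poly_roots_finite finite_subset by blast
qed

lemma katz_stretch_bound:
  assumes G: "undirected_graph n A" and "0 < \<beta>" and "\<beta> * largest_eigenvalue n A < 1"
  shows "\<exists>r. 0 \<le> r \<and> \<beta> * r < 1 \<and> (\<forall>v. sqnorm n (mat_vec n A v) \<le> r\<^sup>2 * sqnorm n v)"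
proof (cases "n = 0")
  case True
  then show ?thesis by (intro exI[of _ 0]) (simp add: sqnorm_def)
next
  case False
  then obtain r where "0 \<le> r" "r \<in> eigenvalues n A"
    and stretch: "\<forall>v. sqnorm n (mat_vec n A v) \<le> r\<^sup>2 * sqnorm n v"
    using exists_eigenvalue_bounding_stretch[of n A, OF undirected_graph_sym[OF G]
        undirected_graph_nonneg[OF G]] by blast
  then have "r \<le> largest_eigenvalue n A"
    unfolding largest_eigenvalue_def using eigenvalues_finite by simp
  then have "\<beta> * r \<le> \<beta> * largest_eigenvalue n A" using \<open>0 < \<beta>\<close> by (simp add: mult_left_mono)
  then show ?thesis using \<open>0 \<le> r\<close> stretch assms(3) by (intro exI[of _ r]) auto
qed

lemma mat_pow_vec_le_stretch_pow:
  assumes x: "valid_input n x" and "0 \<le> r"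
    and stretch: "\<And>v. sqnorm n (mat_vec n A v) \<le> r\<^sup>2 * sqnorm n v" and "v < n"
  shows "mat_pow_vec n A i x v \<le> r ^ i"
proof -
  have "sqnorm n (mat_pow_vec n A i x) \<le> (r ^ i)\<^sup>2"
  proof (induction i)
    case 0
    then show ?case using sqnorm_le_norm1_sq[of n x] x unfolding valid_input_def by simp
  next
    case (Suc i)
    have "sqnorm n (mat_pow_vec n A (Suc i) x) \<le> r\<^sup>2 * sqnorm n (mat_pow_vec n A i x)"
      by (simp add: stretch)
    also have "\<dots> \<le> r\<^sup>2 * (r ^ i)\<^sup>2" using Suc by (intro mult_left_mono) auto
    also have "\<dots> = (r ^ Suc i)\<^sup>2" by (simp only: power_Suc power_mult_distrib)
    finally show ?case .
  qed
  then have "(mat_pow_vec n A i x v)\<^sup>2 \<le> (r ^ i)\<^sup>2"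
    by (rule order_trans[OF component_sq_le_sqnorm[OF \<open>v < n\<close>]])
  then show ?thesis by (rule power2_le_imp_le) (simp add: \<open>0 \<le> r\<close>)
qed

lemma katz_truncation:
  assumes G: "undirected_graph n A" and "0 < \<beta>" "\<beta> * largest_eigenvalue n A < 1"
  shows "\<exists>C. \<forall>x \<delta>. valid_input n x \<and> 0 < \<delta> \<and> \<delta> < 1 \<longrightarrow>
           (\<exists>L::nat. real L \<le> C * (1 + ln (1 / \<delta>)) \<and> good_trunc n A 0 0 (\<lambda>i. \<beta> ^ i) x \<delta> L)"
proof -
  obtain r where "0 \<le> r" "\<beta> * r < 1"
    and stretch: "\<And>v. sqnorm n (mat_vec n A v) \<le> r\<^sup>2 * sqnorm n v"
    using katz_stretch_bound[OF assms] by blast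
  have entry: "0 \<le> \<beta> ^ i * mat_pow_vec n A i x v \<and> \<beta> ^ i * mat_pow_vec n A i x v \<le> (\<beta> * r) ^ i"
    if x: "valid_input n x" and "v < n" for x i v
  proof -
    have "0 \<le> mat_pow_vec n A i x v"
      using undirected_graph_nonneg[OF G] x \<open>v < n\<close> unfolding valid_input_def
      by (intro mat_pow_vec_nonneg) auto
    moreover have "mat_pow_vec n A i x v \<le> r ^ i"
      using mat_pow_vec_le_stretch_pow[OF x \<open>0 \<le> r\<close> stretch \<open>v < n\<close>] .
    ultimately show ?thesis using \<open>0 < \<beta>\<close> by (simp add: power_mult_distrib mult_left_mono)
  qed
  have mass: "(\<Sum>v<n. \<beta> ^ i * mat_pow_vec n A i x v) \<le> real n * (\<beta> * r) ^ i"
    if "valid_input n x" for x i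
    using sum_bounded_above[of "{..<n}" "\<lambda>v. \<beta> ^ i * mat_pow_vec n A i x v"] entry[OF that] by simp
  have "summable (\<lambda>i. real n * (\<beta> * r) ^ i)"
    using \<open>0 \<le> r\<close> \<open>0 < \<beta>\<close> \<open>\<beta> * r < 1\<close> by (intro summable_mult summable_geometric) auto
  then have "\<exists>C. \<forall>\<delta>. 0 < \<delta> \<and> \<delta> < 1 \<longrightarrow> (\<exists>L::nat. real L \<le> C * (1 + ln (1 / \<delta>)) \<and>
      (\<forall>x. valid_input n x \<longrightarrow> good_trunc n A 0 0 (\<lambda>i. \<beta> ^ i) x \<delta> L))"
    using entry mass \<open>0 \<le> r\<close> \<open>0 < \<beta>\<close> \<open>\<beta> * r < 1\<close> unfolding transM_0_0
    by (intro exists_log_truncation[of "\<beta> * r" "real n"] allI impI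
        good_trunc_of_mass_bound[where e = "\<lambda>i. real n * (\<beta> * r) ^ i"]) (auto simp: transM_0_0)
  then show ?thesis by blast
qed

theorem lemmaC3:
  shows
  \<comment> \<open>(i) PageRank: a = 0, b = 1, w_i = alpha (1-alpha)^i; L = O(log(1/delta))\<close>
  "(\<forall>\<alpha>::real. 0 < \<alpha> \<and> \<alpha> < 1 \<longrightarrow>
      (\<exists>C::real. \<forall>n A x \<delta>. undirected_graph n A \<and> valid_input n x \<and> 0 < \<delta> \<and> \<delta> < 1 \<longrightarrow>
         (\<exists>L::nat. real L \<le> C * (1 + ln (1 / \<delta>)) \<and>
            good_trunc n A 0 1 (\<lambda>i. \<alpha> * (1 - \<alpha>) ^ i) x \<delta> L)))
   \<and>
  \<comment> \<open>(ii) heat kernel PageRank: a = 0, b = 1, w_i = e^{-t} t^i / i!; L = O(log(1/delta))\<close>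
   (\<forall>t::real. 0 < t \<longrightarrow>
      (\<exists>C::real. \<forall>n A x \<delta>. undirected_graph n A \<and> valid_input n x \<and> 0 < \<delta> \<and> \<delta> < 1 \<longrightarrow>
         (\<exists>L::nat. real L \<le> C * (1 + ln (1 / \<delta>)) \<and>
            good_trunc n A 0 1 (\<lambda>i. exp (- t) * t ^ i / fact i) x \<delta> L)))
   \<and>
  \<comment> \<open>(iii) k-hop transition probability: a = 0, b = 1, w_k = 1, w_i = 0 otherwise; any L \<ge> k\<close>
   (\<forall>k::nat. \<forall>n A x \<delta>. undirected_graph n A \<and> valid_input n x \<and> 0 < \<delta> \<and> \<delta> < 1 \<longrightarrow>
         (\<forall>L::nat. L \<ge> k \<longrightarrow>
            good_trunc n A 0 1 (\<lambda>i. if i = k then 1 else 0) x \<delta> L))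
   \<and>
  \<comment> \<open>(iv) Katz: a = b = 0, w_i = beta^i with 0 < beta < 1/lambda_1; L = O(log(1/delta))\<close>
   (\<forall>\<beta>::real. \<forall>n A. undirected_graph n A \<and> 0 < \<beta> \<and> \<beta> * largest_eigenvalue n A < 1 \<longrightarrow>
      (\<exists>C::real. \<forall>x \<delta>. valid_input n x \<and> 0 < \<delta> \<and> \<delta> < 1 \<longrightarrow>
         (\<exists>L::nat. real L \<le> C * (1 + ln (1 / \<delta>)) \<and>
            good_trunc n A 0 0 (\<lambda>i. \<beta> ^ i) x \<delta> L)))"
  by (intro conjI allI impI pagerank_truncation heat_kernel_truncation k_hop_truncation
      katz_truncation) auto

end
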